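(* Let $g>0$, $\varepsilon>0$, $\lambda_0>0$, $\nu_0>0$ be constants. For each $N\ge 1$ define the constants $\Gamma^N,\Phi^N,\Omega^N,\Lambda^N$ and the maps $A^N,S^N$ as in the context below. Then for every $N\ge 2$ the reduced shallow water moment system of order $N$, $\partial_tU+A^N(U)\partial_xU=S^N(U)$ with $U=(h,hu_m)$, is identical to that of order $2$: that is, $A^N(U)=A^2(U)$ and $S^N(U)=S^2(U)$ for all $h>0$, $u_m\in\mathbb{R}$ (equivalently, $\Gamma^N=\Gamma^2$, $\Phi^N=\Phi^2$, $\Omega^N=\Omega^2$ and $\Lambda^N=\Lambda^2$).
   Context: Let $\phi_j(\zeta)=\frac{1}{j!}\frac{\mathrm{d}^j}{\mathrm{d}\zeta^j}(\zeta-\zeta^2)^j$ (scaled Legendre polynomials on $[0,1]$). For $N\ge1$ let $\boldsymbol{C}_N\in\mathbb{R}^{N\times N}$ have entries $C_{ij}=\int_0^1\phi_i'(\zeta)\phi_j'(\zeta)\,\mathrm{d}\zeta$, and let $\widetilde{\boldsymbol{C}}_N$ have entries $(\widetilde{\boldsymbol{C}}_N)_{ij}=(2i+1)C_{ij}$, $i,j=1,\dots,N$; $\boldsymbol{C}_N$ (hence $\widetilde{\boldsymbol{C}}_N$) is invertible. Define, for $i=1,\dots,N$, $\widetilde B_i^{(N)}=\sum_{j=1}^N(\boldsymbol{C}_N^{-1})_{ij}$, $\widetilde F_i^{(N)}=\sum_{j=1}^N(\widetilde{\boldsymbol{C}}_N^{-1}\boldsymbol{C}_N^{-1})_{ij}$,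 $\widetilde D_i^{(N)}=-\sum_{j=1}^N(\widetilde{\boldsymbol{C}}_N^{-1}\boldsymbol{C}_N^{-1})_{ij}+\Big(\sum_{k,l=1}^N(\boldsymbol{C}_N^{-1})_{kl}\Big)\Big(\sum_{j=1}^N(\boldsymbol{C}_N^{-1})_{ij}\Big)$, and $\Gamma^N=\sum_{j=1}^N\frac{(\widetilde B_j^{(N)})^2}{2j+1}$, $\Phi^N=\sum_{j=1}^N\widetilde F_j^{(N)}$, $\Omega^N=\sum_{j=1}^N\widetilde B_j^{(N)}$, $\Lambda^N=\sum_{j=1}^N\widetilde D_j^{(N)}$. For $U=(h,hu_m)$ with $h>0$, $u_m\in\mathbb{R}$, set \[A^N(U)=\begin{pmatrix}0&1\\ -u_m^2\big(1-\frac{\varepsilon^2h^2}{\lambda_0^2}\Gamma^N\big)+gh\big(1-\frac{\varepsilon^2h^2}{\lambda_0\nu_0}\Phi^N\big) & 2u_m\big(1+\frac{\varepsilon^2h^2}{\lambda_0^2}\Gamma^N\big)\end{pmatrix},\] \[S^N(U)=\begin{pmatrix}0\\ -\frac{\nu_0}{\lambda_0}u_m\big(1-\frac{\varepsilon}{\lambda_0}\Omega^Nh+\frac{\varepsilon^2}{\lambda_0^2}\Lambda^Nh^2\big)\end{pmatrix}.\] The system $\partial_tU+A^N(U)\partial_xU=S^N(U)$ is called the reduced shallow water moment equations (RSWME) of order $N$. *)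

theory Defs
  imports "HOL-Analysis.Analysis" "HOL-Computational_Algebra.Polynomial"
begin

text \<open>Scaled Legendre polynomials on [0,1]: phi_j = (1/j!) d^j/dz^j (z - z^2)^j.\<close>
definition phi :: "nat \<Rightarrow> real poly" where
  "phi j = smult (1 / fact j) ((pderiv ^^ j) ([:0, 1, -1:] ^ j))"

definition Cent :: "nat \<Rightarrow> nat \<Rightarrow> real" where
  "Cent i j = integral {0..1} (\<lambda>z. poly (pderiv (phi i)) z * poly (pderiv (phi j)) z)"

text \<open>Matrices of size N x N are represented as functions nat => nat => real,
  indexed by {1..N}, with entries outside {1..N} x {1..N} irrelevant.\<close>
definition mat_inv :: "nat \<Rightarrow> (nat \<Rightarrow> nat \<Rightarrow> real) \<Rightarrow> (nat \<Rightarrow> nat \<Rightarrow> real)" where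
  "mat_inv N M = (THE X. (\<forall>i j. (i \<notin> {1..N} \<or> j \<notin> {1..N}) \<longrightarrow> X i j = 0) \<and>
      (\<forall>i\<in>{1..N}. \<forall>j\<in>{1..N}. (\<Sum>k=1..N. M i k * X k j) = (if i = j then 1 else 0)))"

definition mat_mul :: "nat \<Rightarrow> (nat \<Rightarrow> nat \<Rightarrow> real) \<Rightarrow> (nat \<Rightarrow> nat \<Rightarrow> real) \<Rightarrow> (nat \<Rightarrow> nat \<Rightarrow> real)" where
  "mat_mul N M P = (\<lambda>i j. \<Sum>k=1..N. M i k * P k j)"

definition Cmat :: "nat \<Rightarrow> nat \<Rightarrow> real" where
  "Cmat = Cent"

definition Ctilde :: "nat \<Rightarrow> nat \<Rightarrow> real" where
  "Ctilde i j = (2 * real i + 1) * Cent i j"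

definition Cinv :: "nat \<Rightarrow> nat \<Rightarrow> nat \<Rightarrow> real" where
  "Cinv N = mat_inv N Cmat"

definition Ctinv :: "nat \<Rightarrow> nat \<Rightarrow> nat \<Rightarrow> real" where
  "Ctinv N = mat_inv N Ctilde"

definition Btil :: "nat \<Rightarrow> nat \<Rightarrow> real" where
  "Btil N i = (\<Sum>j=1..N. Cinv N i j)"

definition Ftil :: "nat \<Rightarrow> nat \<Rightarrow> real" where
  "Ftil N i = (\<Sum>j=1..N. mat_mul N (Ctinv N) (Cinv N) i j)"

definition Dtil :: "nat \<Rightarrow> nat \<Rightarrow> real" where
  "Dtil N i = - (\<Sum>j=1..N. mat_mul N (Ctinv N) (Cinv N) i j)
     + (\<Sum>k=1..N. \<Sum>l=1..N. Cinv N k l) * (\<Sum>j=1..N. Cinv N i j)"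

definition Gam :: "nat \<Rightarrow> real" where
  "Gam N = (\<Sum>j=1..N. (Btil N j)\<^sup>2 / (2 * real j + 1))"

definition Phi :: "nat \<Rightarrow> real" where
  "Phi N = (\<Sum>j=1..N. Ftil N j)"

definition Omg :: "nat \<Rightarrow> real" where
  "Omg N = (\<Sum>j=1..N. Btil N j)"

definition Lam :: "nat \<Rightarrow> real" where
  "Lam N = (\<Sum>j=1..N. Dtil N j)"

definition AN :: "nat \<Rightarrow> real \<Rightarrow> real \<Rightarrow> real \<Rightarrow> real \<Rightarrow> real \<Rightarrow> real \<Rightarrow> real ^ 2 ^ 2" where
  "AN N g eps lam0 nu0 h um = vector [vector [0, 1],
     vector [- um\<^sup>2 * (1 - eps\<^sup>2 * h\<^sup>2 / lam0\<^sup>2 * Gam N)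
               + g * h * (1 - eps\<^sup>2 * h\<^sup>2 / (lam0 * nu0) * Phi N),
             2 * um * (1 + eps\<^sup>2 * h\<^sup>2 / lam0\<^sup>2 * Gam N)]]"

definition SN :: "nat \<Rightarrow> real \<Rightarrow> real \<Rightarrow> real \<Rightarrow> real \<Rightarrow> real \<Rightarrow> real \<Rightarrow> real ^ 2" where
  "SN N g eps lam0 nu0 h um = vector [0,
     - nu0 / lam0 * um * (1 - eps / lam0 * Omg N * h + eps\<^sup>2 / lam0\<^sup>2 * Lam N * h\<^sup>2)]"

end

theory Submission
  imports Defs "Jordan_Normal_Form.Determinant"
begin

(* Let y = (1/4, 1/12, 0, ..., 0). Since phi_1'/4 + phi_2'/12 = z - 1 and, integrating by parts,
   int_0^1 phi_i'(z) (z - 1) dz = phi_i(0) - int_0^1 phi_i = 1 for every i >= 1, the vector y solves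
   C_N y = (1, ..., 1) whenever N >= 2. As the Gram matrix of linearly independent polynomials, C_N is
   invertible, so the row sums of C_N^-1 are the y_i; by symmetry of C_N the column sums of
   tilde C_N^-1 are y_i / (2i + 1). Hence every constant only involves the indices 1 and 2:
   Gamma^N = Phi^N = 1/45, Omega^N = 1/3 and Lambda^N = (Omega^N)^2 - Phi^N = 4/45. *)

lemma power_dvd_pderiv:
  fixes p q :: "'a::idom poly"
  assumes "q ^ Suc m dvd p"
  shows "q ^ m dvd pderiv p"
proof -
  obtain r where p: "p = q ^ Suc m * r"
    using assms by (auto elim: dvdE)
  have "pderiv p = q ^ m * (Polynomial.smult (of_nat (Suc m)) (pderiv q) * r + q * pderiv r)"
    unfolding p pderiv_mult pderiv_power_Suc by (simp add: algebra_simps)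
  then show ?thesis
    by simp
qed

lemma power_dvd_higher_pderiv:
  fixes p q :: "'a::idom poly"
  assumes "q ^ m dvd p" and "k \<le> m"
  shows "q ^ (m - k) dvd (pderiv ^^ k) p"
  using assms(2)
proof (induction k)
  case 0
  then show ?case using assms(1) by simp
next
  case (Suc k)
  then have "q ^ Suc (m - Suc k) dvd (pderiv ^^ k) p"
    by (simp add: Suc_diff_Suc)
  then show ?case
    by (simp add: power_dvd_pderiv)
qed

lemma poly_higher_pderiv_power_root:
  fixes q :: "'a::idom poly"
  assumes "poly q a = 0" and "k < m"
  shows "poly ((pderiv ^^ k) (q ^ m)) a = 0"
proof -
  obtain r where "(pderiv ^^ k) (q ^ m) = q ^ (m - k) * r"
    using power_dvd_higher_pderiv[of q m "q ^ m" k] assms(2) by (auto elim: dvdE)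
  then show ?thesis
    using assms by simp
qed

lemma sum_smult_graded_eq_0:
  fixes p :: "nat \<Rightarrow> 'a::idom poly"
  assumes "\<And>k. k \<in> {1..N} \<Longrightarrow> p k \<noteq> 0 \<and> degree (p k) = k - 1"
    and "(\<Sum>k=1..N. Polynomial.smult (v k) (p k)) = 0"
  shows "\<forall>k\<in>{1..N}. v k = 0"
  using assms
proof (induction N)
  case 0
  then show ?case by simp
next
  case (Suc N)
  have "coeff (p k) N = 0" if "k \<in> {1..N}" for k
    using Suc.prems(1)[of k] that by (intro coeff_eq_0) auto
  then have "coeff (\<Sum>k=1..N. Polynomial.smult (v k) (p k)) N = 0"
    by (simp add: coeff_sum)
  moreover have "coeff (\<Sum>k=1..Suc N. Polynomial.smult (v k) (p k)) N = 0"
    using Suc.prems(2) by simp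
  moreover have "coeff (p (Suc N)) N \<noteq> 0"
    using leading_coeff_neq_0[of "p (Suc N)"] Suc.prems(1)[of "Suc N"] by simp
  ultimately have "v (Suc N) = 0"
    by simp
  moreover have "\<forall>k\<in>{1..N}. v k = 0"
    using Suc.IH Suc.prems \<open>v (Suc N) = 0\<close> by simp
  ultimately show ?case
    by (auto simp: le_Suc_eq)
qed

lemma integrable_poly: "poly p integrable_on {a..b::real}"
  by (intro integrable_continuous_interval continuous_on_poly continuous_on_id)

lemma integral_poly_pderiv:
  fixes a b :: real
  assumes "a \<le> b"
  shows "integral {a..b} (poly (pderiv p)) = poly p b - poly p a"
proof (rule integral_unique, rule fundamental_theorem_of_calculus)
  show "\<And>x. x \<in> {a..b} \<Longrightarrow> (poly p has_vector_derivative poly (pderiv p) x) (at x within {a..b})"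
    by (simp add: has_real_derivative_iff_has_vector_derivative[symmetric] DERIV_subset[OF poly_DERIV])
qed (use assms in auto)

lemma integral_poly_smult:
  "integral {a..b::real} (poly (Polynomial.smult c p)) = c * integral {a..b} (poly p)"
proof -
  have "poly (Polynomial.smult c p) = (\<lambda>x. c * poly p x)"
    by auto
  then show ?thesis
    by simp
qed

lemma integral_poly_sum:
  "integral {a..b::real} (poly (\<Sum>k\<in>A. f k)) = (\<Sum>k\<in>A. integral {a..b} (poly (f k)))"
proof (cases "finite A")
  case True
  have "poly (\<Sum>k\<in>A. f k) = (\<lambda>x. \<Sum>k\<in>A. poly (f k) x)"
    by (auto simp: poly_sum)
  then show ?thesis
    using True by (simp add: integral_sum integrable_poly)
qed (simp add: poly_0[abs_def])

lemma poly_eq_0_if_integral_square_eq_0: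
  fixes p :: "real poly"
  assumes "a < b" and "integral {a..b} (poly (p * p)) = 0"
  shows "p = 0"
proof (rule ccontr)
  assume "p \<noteq> 0"
  have "(poly (p * p) has_integral 0) (cbox a b)"
    using assms(2) integrable_poly[of "p * p" a b] by (metis box_real(2) has_integral_integral)
  then have "poly (p * p) x = 0" if "x \<in> {a..b}" for x
    using assms(1) that
    by (intro has_integral_0_cbox_imp_0[of a b "poly (p * p)"]) (auto intro!: continuous_intros)
  then have "{a..b} \<subseteq> {x. poly p x = 0}"
    by auto
  moreover have "finite {x. poly p x = 0}"
    using \<open>p \<noteq> 0\<close> by (rule poly_roots_finite)
  ultimately show False
    using assms(1) finite_subset infinite_Icc by blast
qed

definition mat_of_fun :: "nat \<Rightarrow> (nat \<Rightarrow> nat \<Rightarrow> real) \<Rightarrow> real mat" where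
  "mat_of_fun N M = mat N N (\<lambda>(i, j). M (Suc i) (Suc j))"

lemma det_mat_of_fun_neq_0:
  fixes M :: "nat \<Rightarrow> nat \<Rightarrow> real"
  assumes inj: "\<And>v. \<forall>i\<in>{1..N}. (\<Sum>k=1..N. M i k * v k) = 0 \<Longrightarrow> \<forall>k\<in>{1..N}. v k = 0"
  shows "det (mat_of_fun N M) \<noteq> 0"
proof
  assume "det (mat_of_fun N M) = 0"
  moreover have "mat_of_fun N M \<in> carrier_mat N N"
    by (simp add: mat_of_fun_def)
  ultimately obtain v where v: "v \<in> carrier_vec N" "v \<noteq> 0\<^sub>v N" "mat_of_fun N M *\<^sub>v v = 0\<^sub>v N"
    using det_0_iff_vec_prod_zero_field by blast
  define w where "w k = (if k \<in> {1..N} then v $ (k - 1) else 0)" for k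
  have "\<forall>i\<in>{1..N}. (\<Sum>k=1..N. M i k * w k) = 0"
  proof
    fix i assume i: "i \<in> {1..N}"
    have "(\<Sum>k=1..N. M i k * w k) = (\<Sum>k<N. M i (Suc k) * v $ k)"
      unfolding One_nat_def sum.atLeast1_atMost_eq by (intro sum.cong) (auto simp: w_def)
    also have "\<dots> = (mat_of_fun N M *\<^sub>v v) $ (i - 1)"
      using i v(1) by (auto simp: mat_of_fun_def mult_mat_vec_def scalar_prod_def intro!: sum.cong)
    finally show "(\<Sum>k=1..N. M i k * w k) = 0"
      using v(3) i by auto
  qed
  then have "\<forall>k\<in>{1..N}. w k = 0"
    by (rule inj)
  then have "v = 0\<^sub>v N"
    using v(1) by (intro eq_vecI) (auto simp: w_def dest!: bspec[of _ _ "Suc _"])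
  then show False
    using v(2) by simp
qed

lemma injective_imp_normalized_right_inverse:
  fixes M :: "nat \<Rightarrow> nat \<Rightarrow> real"
  assumes inj: "\<And>v. \<forall>i\<in>{1..N}. (\<Sum>k=1..N. M i k * v k) = 0 \<Longrightarrow> \<forall>k\<in>{1..N}. v k = 0"
  shows "\<exists>X. (\<forall>i j. (i \<notin> {1..N} \<or> j \<notin> {1..N}) \<longrightarrow> X i j = 0) \<and>
      (\<forall>i\<in>{1..N}. \<forall>j\<in>{1..N}. (\<Sum>k=1..N. M i k * X k j) = (if i = j then 1 else 0))"
proof -
  have A: "mat_of_fun N M \<in> carrier_mat N N"
    by (simp add: mat_of_fun_def)
  obtain B where B: "B \<in> carrier_mat N N" "mat_of_fun N M * B = 1\<^sub>m N"
    using det_non_zero_imp_unit[OF A det_mat_of_fun_neq_0[OF inj], of "()"]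
    unfolding Units_def ring_mat_def by auto
  define X where "X i j = (if i \<in> {1..N} \<and> j \<in> {1..N} then B $$ (i - 1, j - 1) else 0)" for i j
  have "(\<Sum>k=1..N. M i k * X k j) = (if i = j then 1 else 0)"
    if i: "i \<in> {1..N}" and j: "j \<in> {1..N}" for i j
  proof -
    have "(\<Sum>k=1..N. M i k * X k j) = (\<Sum>k<N. M i (Suc k) * B $$ (k, j - 1))"
      unfolding One_nat_def sum.atLeast1_atMost_eq by (intro sum.cong) (use j in \<open>auto simp: X_def\<close>)
    also have "\<dots> = (mat_of_fun N M * B) $$ (i - 1, j - 1)"
      using i j B(1) by (auto simp: mat_of_fun_def times_mat_def scalar_prod_def intro!: sum.cong)
    finally show ?thesis
      using B(2) i j by auto
  qed
  then show ?thesis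
    by (intro exI[of _ X]) (auto simp: X_def)
qed

lemma mat_inv_right_inverse:
  fixes M :: "nat \<Rightarrow> nat \<Rightarrow> real"
  assumes inj: "\<And>v. \<forall>i\<in>{1..N}. (\<Sum>k=1..N. M i k * v k) = 0 \<Longrightarrow> \<forall>k\<in>{1..N}. v k = 0"
    and "i \<in> {1..N}" and "j \<in> {1..N}"
  shows "(\<Sum>k=1..N. M i k * mat_inv N M k j) = (if i = j then 1 else 0)"
proof -
  define P where "P X \<longleftrightarrow> (\<forall>i j. (i \<notin> {1..N} \<or> j \<notin> {1..N}) \<longrightarrow> X i j = 0) \<and>
      (\<forall>i\<in>{1..N}. \<forall>j\<in>{1..N}. (\<Sum>k=1..N. M i k * X k j) = (if i = j then 1 else 0))"
    for X :: "nat \<Rightarrow> nat \<Rightarrow> real"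
  have unique: "X = Y" if X: "P X" and Y: "P Y" for X Y
  proof (intro ext)
    fix i j
    show "X i j = Y i j"
    proof (cases "i \<in> {1..N} \<and> j \<in> {1..N}")
      case True
      have "\<forall>i\<in>{1..N}. (\<Sum>k=1..N. M i k * (X k j - Y k j)) = 0"
        using X Y True unfolding P_def by (simp add: right_diff_distrib sum_subtractf)
      then have "\<forall>k\<in>{1..N}. X k j - Y k j = 0"
        by (rule inj)
      then show ?thesis
        using True by simp
    next
      case False
      then show ?thesis
        using X Y unfolding P_def by simp
    qed
  qed
  have "\<exists>X. P X"
    unfolding P_def by (rule injective_imp_normalized_right_inverse[OF inj])
  then have "\<exists>!X. P X"
    using unique by blast
  then have "P (THE X. P X)"
    by (rule theI')
  moreover have "mat_inv N M = (THE X. P X)"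
    unfolding mat_inv_def P_def ..
  ultimately show ?thesis
    using assms(2,3) unfolding P_def by simp
qed

lemma mat_inv_row_sum:
  fixes M :: "nat \<Rightarrow> nat \<Rightarrow> real"
  assumes inj: "\<And>v. \<forall>i\<in>{1..N}. (\<Sum>k=1..N. M i k * v k) = 0 \<Longrightarrow> \<forall>k\<in>{1..N}. v k = 0"
    and y: "\<forall>i\<in>{1..N}. (\<Sum>k=1..N. M i k * y k) = 1"
    and "i \<in> {1..N}"
  shows "(\<Sum>j=1..N. mat_inv N M i j) = y i"
proof -
  have "(\<Sum>k=1..N. M i k * ((\<Sum>j=1..N. mat_inv N M k j) - y k)) = 0" if i: "i \<in> {1..N}" for i
  proof -
    have "(\<Sum>k=1..N. M i k * (\<Sum>j=1..N. mat_inv N M k j)) =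
        (\<Sum>j=1..N. \<Sum>k=1..N. M i k * mat_inv N M k j)"
      by (simp add: sum_distrib_left) (rule sum.swap)
    also have "\<dots> = (\<Sum>j=1..N. if i = j then 1 else 0)"
      using mat_inv_right_inverse[OF inj i] by simp
    also have "\<dots> = 1"
      using i by simp
    finally show ?thesis
      using y i by (simp add: right_diff_distrib sum_subtractf)
  qed
  then show ?thesis
    using inj[of "\<lambda>k. (\<Sum>j=1..N. mat_inv N M k j) - y k"] assms(3) by simp
qed

lemma mat_inv_column_sum:
  fixes M :: "nat \<Rightarrow> nat \<Rightarrow> real"
  assumes inj: "\<And>v. \<forall>i\<in>{1..N}. (\<Sum>k=1..N. M i k * v k) = 0 \<Longrightarrow> \<forall>k\<in>{1..N}. v k = 0"
    and u: "\<forall>l\<in>{1..N}. (\<Sum>i=1..N. u i * M i l) = 1"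
    and k: "k \<in> {1..N}"
  shows "(\<Sum>l=1..N. mat_inv N M l k) = u k"
proof -
  have "(\<Sum>l=1..N. mat_inv N M l k) = (\<Sum>l=1..N. (\<Sum>i=1..N. u i * M i l) * mat_inv N M l k)"
    using u by simp
  also have "\<dots> = (\<Sum>i=1..N. u i * (\<Sum>l=1..N. M i l * mat_inv N M l k))"
    by (simp add: sum_distrib_left sum_distrib_right mult.assoc) (rule sum.swap)
  also have "\<dots> = (\<Sum>i=1..N. u i * (if i = k then 1 else 0))"
    using mat_inv_right_inverse[OF inj _ k] by simp
  also have "\<dots> = u k"
    using k by (simp add: if_distrib cong: if_cong)
  finally show ?thesis .
qed

definition rodrigues_poly :: "real poly" where
  "rodrigues_poly = [:0, 1, -1:]"

lemma phi_rodrigues: "phi j = Polynomial.smult (1 / fact j) ((pderiv ^^ j) (rodrigues_poly ^ j))"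
  by (simp add: phi_def rodrigues_poly_def)

lemma poly_rodrigues_poly_0_1: "poly rodrigues_poly 0 = 0" "poly rodrigues_poly 1 = 0"
  by (simp_all add: rodrigues_poly_def)

lemma poly_phi_0: "poly (phi j) 0 = 1"
proof -
  have "rodrigues_poly ^ j = monom 1 j * [:1, -1:] ^ j"
    by (simp add: rodrigues_poly_def monom_altdef flip: power_mult_distrib)
  then have "coeff (rodrigues_poly ^ j) j = 1"
    by (simp add: coeff_monom_mult coeff_0_power)
  then show ?thesis
    by (simp add: poly_0_coeff_0 phi_rodrigues coeff_higher_pderiv flip: pochhammer_fact)
qed

lemma degree_phi: "degree (phi j) = j"
proof -
  have "rodrigues_poly \<noteq> 0" "degree rodrigues_poly = 2"
    by (simp_all add: rodrigues_poly_def)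
  then show ?thesis
    by (simp add: phi_rodrigues degree_higher_pderiv degree_power_eq)
qed

lemma pderiv_phi_graded:
  assumes "k \<ge> 1"
  shows "pderiv (phi k) \<noteq> 0 \<and> degree (pderiv (phi k)) = k - 1"
  using assms by (simp add: degree_pderiv degree_phi pderiv_eq_0_iff)

lemma pderiv_phi_1: "pderiv (phi 1) = [:-2:]"
  by (simp add: phi_def pderiv_pCons)

lemma pderiv_phi_2: "pderiv (phi 2) = [:-6, 12:]"
  by (simp add: phi_def pderiv_pCons numeral_2_eq_2 pderiv_mult)

lemma Cent_sym: "Cent i j = Cent j i"
  by (simp add: Cent_def mult.commute)

lemma Cent_mult_sum:
  "(\<Sum>k=1..N. Cent i k * v k) =
     integral {0..1} (poly (pderiv (phi i) * (\<Sum>k=1..N. Polynomial.smult (v k) (pderiv (phi k)))))"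
proof -
  have "Cent i k = integral {0..1} (poly (pderiv (phi i) * pderiv (phi k)))" for k
    unfolding Cent_def poly_mult[symmetric] by (rule refl)
  then show ?thesis
    by (simp add: sum_distrib_left integral_poly_sum integral_poly_smult mult.commute)
qed

lemma Cent_injective:
  assumes "\<forall>i\<in>{1..N}. (\<Sum>k=1..N. Cent i k * v k) = 0"
  shows "\<forall>k\<in>{1..N}. v k = 0"
proof -
  define q where "q = (\<Sum>k=1..N. Polynomial.smult (v k) (pderiv (phi k)))"
  have "q * q = (\<Sum>i=1..N. Polynomial.smult (v i) (pderiv (phi i) * q))"
    by (simp add: q_def sum_distrib_right)
  then have "integral {0..1} (poly (q * q)) =
      (\<Sum>i=1..N. v i * integral {0..1} (poly (pderiv (phi i) * q)))"
    by (simp add: integral_poly_sum integral_poly_smult)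
  also have "\<dots> = (\<Sum>i=1..N. v i * (\<Sum>k=1..N. Cent i k * v k))"
    unfolding Cent_mult_sum q_def ..
  also have "\<dots> = 0"
    using assms by simp
  finally have "q = 0"
    by (intro poly_eq_0_if_integral_square_eq_0[of 0 1]) simp_all
  then show ?thesis
    using pderiv_phi_graded by (intro sum_smult_graded_eq_0[of N]) (auto simp: q_def)
qed

lemma Ctilde_injective:
  assumes "\<forall>i\<in>{1..N}. (\<Sum>k=1..N. Ctilde i k * v k) = 0"
  shows "\<forall>k\<in>{1..N}. v k = 0"
proof (rule Cent_injective, intro ballI)
  fix i assume "i \<in> {1..N}"
  then have "(2 * real i + 1) * (\<Sum>k=1..N. Cent i k * v k) = 0"
    using assms by (simp add: Ctilde_def sum_distrib_left mult.assoc)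
  then show "(\<Sum>k=1..N. Cent i k * v k) = 0"
    by (simp add: add_nonneg_eq_0_iff)
qed

lemma integral_pderiv_phi_mult_linear:
  assumes "i \<ge> 1"
  shows "integral {0..1} (poly (pderiv (phi i) * [:-1, 1:])) = 1"
proof -
  obtain j where i: "i = Suc j"
    using assms by (cases i) auto
  \<comment> \<open>Integration by parts against an antiderivative F of phi i that vanishes at 0 and 1.\<close>
  define F where "F = Polynomial.smult (1 / fact i) ((pderiv ^^ j) (rodrigues_poly ^ i))"
  have "pderiv F = phi i"
    by (simp add: F_def i phi_rodrigues pderiv_smult)
  moreover have "poly F 0 = 0" "poly F 1 = 0"
    using poly_higher_pderiv_power_root[of rodrigues_poly _ j i] poly_rodrigues_poly_0_1
    by (simp_all add: F_def i)
  moreover define G where "G = phi i * [:-1, 1:] - F"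
  ultimately have "pderiv G = pderiv (phi i) * [:-1, 1:]" "poly G 1 - poly G 0 = 1"
    by (simp_all add: G_def pderiv_diff pderiv_mult pderiv_pCons poly_phi_0)
  then show ?thesis
    using integral_poly_pderiv[of 0 1 G] by simp
qed

definition ones_solution :: "nat \<Rightarrow> real" where
  "ones_solution k = (if k = 1 then 1/4 else if k = 2 then 1/12 else 0)"

lemma sum_supported_1_2:
  fixes f :: "nat \<Rightarrow> 'a::comm_monoid_add"
  assumes "N \<ge> 2" and "\<And>k. k \<noteq> 1 \<Longrightarrow> k \<noteq> 2 \<Longrightarrow> f k = 0"
  shows "(\<Sum>k=1..N. f k) = f 1 + f 2"
proof -
  have "(\<Sum>k=1..N. f k) = (\<Sum>k\<in>{1,2}. f k)"
    using assms by (intro sum.mono_neutral_right) auto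
  then show ?thesis
    by simp
qed

lemma sum_ones_solution_pderiv_phi:
  assumes "N \<ge> 2"
  shows "(\<Sum>k=1..N. Polynomial.smult (ones_solution k) (pderiv (phi k))) = [:-1, 1:]"
proof -
  have "(\<Sum>k=1..N. Polynomial.smult (ones_solution k) (pderiv (phi k))) =
      Polynomial.smult (1/4) (pderiv (phi 1)) + Polynomial.smult (1/12) (pderiv (phi 2))"
    using assms by (subst sum_supported_1_2) (simp_all add: ones_solution_def)
  then show ?thesis
    unfolding pderiv_phi_1 pderiv_phi_2 by simp
qed

lemma Cent_ones_solution:
  assumes "i \<ge> 1" and "N \<ge> 2"
  shows "(\<Sum>k=1..N. Cent i k * ones_solution k) = 1"
  unfolding Cent_mult_sum sum_ones_solution_pderiv_phi[OF assms(2)]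
  using assms(1) by (rule integral_pderiv_phi_mult_linear)

lemma Btil_eq_ones_solution:
  assumes "N \<ge> 2" and "i \<in> {1..N}"
  shows "Btil N i = ones_solution i"
  unfolding Btil_def Cinv_def Cmat_def
  using Cent_injective Cent_ones_solution assms by (intro mat_inv_row_sum) auto

lemma Ctinv_column_sum:
  assumes "N \<ge> 2" and "k \<in> {1..N}"
  shows "(\<Sum>l=1..N. Ctinv N l k) = ones_solution k / (2 * real k + 1)"
proof -
  have "(\<Sum>i=1..N. ones_solution i / (2 * real i + 1) * Ctilde i l) = 1" if "l \<in> {1..N}" for l
  proof -
    have "(\<Sum>i=1..N. ones_solution i / (2 * real i + 1) * Ctilde i l) =
        (\<Sum>i=1..N. Cent l i * ones_solution i)"
      by (intro sum.cong) (auto simp: Ctilde_def Cent_sym[of l] field_simps simp del: of_nat_Suc)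
    also have "\<dots> = 1"
      using Cent_ones_solution that assms(1) by simp
    finally show ?thesis .
  qed
  then show ?thesis
    unfolding Ctinv_def using Ctilde_injective assms(2)
    by (intro mat_inv_column_sum[where u = "\<lambda>i. ones_solution i / (2 * real i + 1)"]) auto
qed

lemma Omg_eq:
  assumes "N \<ge> 2"
  shows "Omg N = 1/3"
proof -
  have "Omg N = (\<Sum>j=1..N. ones_solution j)"
    unfolding Omg_def using Btil_eq_ones_solution[OF assms] by (intro sum.cong) auto
  also have "\<dots> = 1/3"
    using assms by (subst sum_supported_1_2) (auto simp: ones_solution_def)
  finally show ?thesis .
qed

lemma Gam_eq:
  assumes "N \<ge> 2"
  shows "Gam N = 1/45"
proof -
  have "Gam N = (\<Sum>j=1..N. (ones_solution j)\<^sup>2 / (2 * real j + 1))"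
    unfolding Gam_def using Btil_eq_ones_solution[OF assms] by (intro sum.cong) auto
  also have "\<dots> = 1/45"
    using assms by (subst sum_supported_1_2) (auto simp: ones_solution_def power2_eq_square)
  finally show ?thesis .
qed

lemma Phi_eq:
  assumes "N \<ge> 2"
  shows "Phi N = 1/45"
proof -
  have "Phi N = (\<Sum>i=1..N. \<Sum>k=1..N. Ctinv N i k * Btil N k)"
    unfolding Phi_def Ftil_def mat_mul_def Btil_def
    by (rule sum.cong[OF refl], simp add: sum_distrib_left, rule sum.swap)
  also have "\<dots> = (\<Sum>k=1..N. ones_solution k * (\<Sum>i=1..N. Ctinv N i k))"
    using Btil_eq_ones_solution[OF assms]
    by (subst sum.swap) (auto simp: sum_distrib_left mult.commute intro!: sum.cong)
  also have "\<dots> = (\<Sum>k=1..N. (ones_solution k)\<^sup>2 / (2 * real k + 1))"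
    using Ctinv_column_sum[OF assms] by (intro sum.cong) (auto simp: power2_eq_square)
  also have "\<dots> = 1/45"
    using assms by (subst sum_supported_1_2) (auto simp: ones_solution_def power2_eq_square)
  finally show ?thesis .
qed

lemma Lam_eq: "Lam N = (Omg N)\<^sup>2 - Phi N"
proof -
  define S where "S = (\<Sum>k=1..N. \<Sum>l=1..N. Cinv N k l)"
  have "Lam N = (\<Sum>i=1..N. - Ftil N i + S * Btil N i)"
    unfolding Lam_def Dtil_def Ftil_def Btil_def S_def ..
  also have "\<dots> = - Phi N + S * Omg N"
    unfolding Phi_def Omg_def by (simp only: sum.distrib sum_negf sum_distrib_left)
  also have "S = Omg N"
    unfolding S_def Omg_def Btil_def ..
  finally show ?thesis
    by (simp add: power2_eq_square)
qed

theorem theorem3: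
  fixes g eps lam0 nu0 :: real and N :: nat
  assumes "g > 0" and "eps > 0" and "lam0 > 0" and "nu0 > 0" and "N \<ge> 2"
  shows "(\<forall>h um. h > 0 \<longrightarrow>
            AN N g eps lam0 nu0 h um = AN 2 g eps lam0 nu0 h um \<and>
            SN N g eps lam0 nu0 h um = SN 2 g eps lam0 nu0 h um)
         \<and> Gam N = Gam 2 \<and> Phi N = Phi 2 \<and> Omg N = Omg 2 \<and> Lam N = Lam 2"
proof -
  have "Gam N = Gam 2" "Phi N = Phi 2" "Omg N = Omg 2" "Lam N = Lam 2"
    using assms(5) by (simp_all add: Gam_eq Phi_eq Omg_eq Lam_eq)
  then show ?thesis
    by (simp add: AN_def SN_def)
qed

end
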